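(* Let $m\ge2$, let $k_1,\dots,k_{m-1}\ge0$ be integers and let $j$ be an integer with $1\le j\le m/2$. Then $\big|e^{(m),j+1}_{k_1,\dots,k_{m-1}}\big|\le\big|e^{(m),j}_{k_1,\dots,k_{m-1}}\big|$. Moreover, if $k_{m-j}\ge1$, then $\big|e^{(m),j+1}_{k_1,\dots,k_{m-1}}\big|\le\frac{j}{m-j}\big|e^{(m),j}_{k_1,\dots,k_{m-1}}\big|$.
   Context: For $1\le j\le m$ and integers $k_1,\dots,k_{m-1}\ge0$, $e^{(m),j}_{k_1,\dots,k_{m-1}}=\prod_{1\le i\le m,\,i\ne j}(i-j)^{k_{(i-j)\bmod m}}$, where $(i-j)\bmod m$ denotes the representative in $\{1,\dots,m-1\}$. *)

theory Defs
  imports Complex_Main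
begin

text \<open>The exponent sequence k is a function
  nat => nat, of which only the values k 1, ..., k (m-1) are used.\<close>
definition e_coef :: "nat \<Rightarrow> (nat \<Rightarrow> nat) \<Rightarrow> nat \<Rightarrow> int" where
  "e_coef m k j = (\<Prod>i\<in>{1..m} - {j}.
      (int i - int j) ^ (k (nat ((int i - int j) mod int m))))"

end

theory Submission
  imports Defs
begin

(* Write r = (i - j) mod m for the residue attached to the factor i of
   e^{(m),j}.  As i runs over {1..m} - {j}, r runs bijectively over {1..m-1}, and
   |i - j| equals the cyclic distance  r  if r <= m - j,  and  m - r  otherwise.
   Hence |e^{(m),j}| = prod_{r=1}^{m-1} dist_j(r)^{k_r}.  Passing from j to j+1
   changes dist only at r = m - j, where the factor m - j becomes j.  Therefore
   |e^{(m),j+1}| = (j/(m-j))^{k_{m-j}} |e^{(m),j}|  for all 1 <= j < m, and when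
   2j <= m the ratio q = j/(m-j) lies in [0,1], so q^n <= 1 and q^n <= q for n >= 1.
   The file proves the reindexed product formula, the ratio formula, and then the
   theorem. *)

text \<open>The absolute value of the integer \<open>i - j\<close> whose residue modulo \<open>m\<close> is \<open>r\<close>,
  for \<open>i\<close> ranging over \<open>{1..m}\<close>.\<close>
definition cyc_dist :: "nat \<Rightarrow> nat \<Rightarrow> nat \<Rightarrow> nat" where
  "cyc_dist m j r = (if r \<le> m - j then r else m - r)"

lemma abs_prod_idom: "\<bar>prod f A\<bar> = (\<Prod>x\<in>A. \<bar>f x :: 'b :: linordered_idom\<bar>)"
  by (induction A rule: infinite_finite_induct) (auto simp: abs_mult)

lemma abs_e_coef_residues:
  assumes "1 \<le> j" "j \<le> m"
  shows "\<bar>e_coef m k j\<bar> = (\<Prod>r\<in>{1..m-1}. int (cyc_dist m j r) ^ k r)"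
proof -
  have "\<bar>e_coef m k j\<bar>
      = (\<Prod>i\<in>{1..m} - {j}. \<bar>int i - int j\<bar> ^ k (nat ((int i - int j) mod int m)))"
    unfolding e_coef_def abs_prod_idom by (simp add: power_abs)
  also have "\<dots> = (\<Prod>r\<in>{1..m-1}. int (cyc_dist m j r) ^ k r)"
  proof (rule prod.reindex_bij_witness[where i = "\<lambda>r. if r \<le> m-j then r+j else r+j-m"
        and j = "\<lambda>i. if j < i then i-j else i+m-j"])
    fix i assume i: "i \<in> {1..m} - {j}"
    define r where "r = (if j < i then i-j else i+m-j)"
    have residue: "(int i - int j) mod int m = int r"
    proof (cases "j < i")
      case True
      then show ?thesis using i assms unfolding r_def by (auto intro!: mod_pos_pos_trivial)
    next
      case False
      then have "(int i - int j) mod int m = (int i - int j + int m) mod int m" by simp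
      also have "\<dots> = int i - int j + int m"
        using False i assms by (intro mod_pos_pos_trivial) auto
      also have "\<dots> = int r" using False i assms unfolding r_def by auto
      finally show ?thesis .
    qed
    have dist: "int (cyc_dist m j r) = \<bar>int i - int j\<bar>"
      using i assms unfolding r_def cyc_dist_def by auto
    show "(if r \<le> m-j then r+j else r+j-m) = i"
      using i assms unfolding r_def by auto
    show "r \<in> {1..m-1}" using i assms unfolding r_def by auto
    show "int (cyc_dist m j r) ^ k r = \<bar>int i - int j\<bar> ^ k (nat ((int i - int j) mod int m))"
      using dist residue by simp
  next
    fix r assume "r \<in> {1..m-1}"
    then show "(if j < (if r \<le> m-j then r+j else r+j-m) then (if r \<le> m-j then r+j else r+j-m)-j
          else (if r \<le> m-j then r+j else r+j-m)+m-j) = r"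
      and "(if r \<le> m-j then r+j else r+j-m) \<in> {1..m} - {j}"
      using assms by auto
  qed
  finally show ?thesis .
qed

lemma cyc_dist_Suc_other: "r \<noteq> m - j \<Longrightarrow> cyc_dist m (Suc j) r = cyc_dist m j r"
  unfolding cyc_dist_def by auto

lemma cyc_dist_pivot: "cyc_dist m j (m - j) = m - j"
  unfolding cyc_dist_def by auto

lemma cyc_dist_Suc_pivot: "j < m \<Longrightarrow> cyc_dist m (Suc j) (m - j) = j"
  unfolding cyc_dist_def by auto

lemma e_coef_Suc_ratio:
  assumes "1 \<le> j" "j < m"
  shows "real_of_int \<bar>e_coef m k (j + 1)\<bar>
         = (real j / real (m - j)) ^ k (m - j) * real_of_int \<bar>e_coef m k j\<bar>"
proof -
  define n where "n = k (m - j)"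
  define P where "P = (\<Prod>r\<in>{1..m-1} - {m-j}. int (cyc_dist m j r) ^ k r)"
  have pivot: "m - j \<in> {1..m-1}" using assms by auto
  have "\<bar>e_coef m k j\<bar> = int (cyc_dist m j (m - j)) ^ n * P"
    using abs_e_coef_residues[of j m k] assms prod.remove[OF _ pivot]
    by (simp add: P_def n_def)
  then have e_j: "\<bar>e_coef m k j\<bar> = int (m - j) ^ n * P"
    by (simp only: cyc_dist_pivot)
  have "\<bar>e_coef m k (j + 1)\<bar> = int (cyc_dist m (Suc j) (m - j)) ^ n
      * (\<Prod>r\<in>{1..m-1} - {m-j}. int (cyc_dist m (Suc j) r) ^ k r)"
    using abs_e_coef_residues[of "j + 1" m k] assms prod.remove[OF _ pivot]
    by (simp add: n_def)
  also have "\<dots> = int j ^ n * (\<Prod>r\<in>{1..m-1} - {m-j}. int (cyc_dist m (Suc j) r) ^ k r)"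
    using assms by (simp only: cyc_dist_Suc_pivot)
  also have "\<dots> = int j ^ n * P"
    unfolding P_def by (simp add: cyc_dist_Suc_other)
  finally have e_Suc: "\<bar>e_coef m k (j + 1)\<bar> = int j ^ n * P" .
  have "real (m - j) > 0" using assms by simp
  then show ?thesis
    unfolding e_j e_Suc n_def[symmetric] by (simp add: power_divide)
qed

theorem mainTheorem14:
  fixes m j :: nat and k :: "nat \<Rightarrow> nat"
  assumes "m \<ge> 2" and "1 \<le> j" and "2 * j \<le> m"
  shows "\<bar>e_coef m k (j + 1)\<bar> \<le> \<bar>e_coef m k j\<bar>
    \<and> (k (m - j) \<ge> 1 \<longrightarrow>
           real_of_int \<bar>e_coef m k (j + 1)\<bar> \<le> real j / real (m - j) * real_of_int \<bar>e_coef m k j\<bar>)"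
proof -
  define q where "q = real j / real (m - j)"
  define E where "E = real_of_int \<bar>e_coef m k j\<bar>"
  have ratio: "real_of_int \<bar>e_coef m k (j + 1)\<bar> = q ^ k (m - j) * E"
    using e_coef_Suc_ratio[of j m k] assms unfolding q_def E_def by simp
  have q_unit: "0 \<le> q" "q \<le> 1" using assms unfolding q_def by auto
  have E_nonneg: "0 \<le> E" unfolding E_def by simp
  have "q ^ k (m - j) * E \<le> 1 * E"
    using q_unit E_nonneg by (intro mult_right_mono power_le_one) auto
  then have "\<bar>e_coef m k (j + 1)\<bar> \<le> \<bar>e_coef m k j\<bar>"
    using ratio unfolding E_def by simp
  moreover have "q ^ k (m - j) * E \<le> q * E" if "k (m - j) \<ge> 1"
    using power_decreasing[OF that q_unit] E_nonneg by (intro mult_right_mono) auto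
  ultimately show ?thesis using ratio unfolding q_def E_def by simp
qed

end
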